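(* Let $\Sigma$ (a $d\times d_1$ matrix function) and $b$ be Borel measurable on $\mathbb{R}^d$, $A=\Sigma\Sigma^t$, and suppose that for some $\lambda>0$ and all $x\neq y$, $$\langle x-y,b(x)-b(y)\rangle\ge-\lambda|x-y|^2,\qquad \mathrm{trace}\bigl((\Sigma(x)-\Sigma(y))(\Sigma(x)-\Sigma(y))^t\bigr)>\lambda|x-y|^2.$$ Then there exists at most one probability solution $\mu$ to $L^*\mu=0$ with $\int(\|\Sigma(x)\|^2+|b(x)||x|)\,\mu(dx)<\infty$.
   Context: For a symmetric nonnegative definite matrix $A(x)=(a^{ij}(x))$ and a vector field $b(x)=(b^i(x))$ with Borel measurable entries, $Lf(x)=\mathrm{trace}(A(x)D^2f(x))+\langle b(x),\nabla f(x)\rangle$. A probability solution to $L^*\mu=0$ is a Borel probability measure $\mu$ on $\mathbb{R}^d$ such that all $a^{ij}$ and $b^i$ are $\mu$-integrable on every compact set and $\int_{\mathbb{R}^d}Lf\,d\mu=0$ for every $f\in C_0^\infty(\mathbb{R}^d)$. *)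

theory Defs
  imports "HOL-Analysis.Analysis" "HOL-Probability.Probability"
begin

fun iter_partial :: "'n::finite list \<Rightarrow> (real^'n \<Rightarrow> real) \<Rightarrow> (real^'n \<Rightarrow> real)" where
  "iter_partial [] f = f"
| "iter_partial (i # is) f = (\<lambda>x. frechet_derivative (iter_partial is f) (at x) (axis i 1))"

definition smooth :: "(real^'n::finite \<Rightarrow> real) \<Rightarrow> bool" where
  "smooth f \<longleftrightarrow> (\<forall>is. iter_partial is f differentiable_on UNIV
                        \<and> continuous_on UNIV (iter_partial is f))"

definition test_fun :: "(real^'n::finite \<Rightarrow> real) \<Rightarrow> bool" where
  "test_fun f \<longleftrightarrow> smooth f \<and> compact (closure {x. f x \<noteq> 0})"

definition grad :: "(real^'n::finite \<Rightarrow> real) \<Rightarrow> real^'n \<Rightarrow> real^'n" where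
  "grad f x = (\<chi> i. iter_partial [i] f x)"

definition hess :: "(real^'n::finite \<Rightarrow> real) \<Rightarrow> real^'n \<Rightarrow> real^'n^'n" where
  "hess f x = (\<chi> i j. iter_partial [i, j] f x)"

definition gen_op :: "(real^'n \<Rightarrow> real^'n^'n) \<Rightarrow> (real^'n \<Rightarrow> real^'n) \<Rightarrow>
    (real^'n::finite \<Rightarrow> real) \<Rightarrow> real^'n \<Rightarrow> real" where
  "gen_op A b f x = trace (A x ** hess f x) + inner (b x) (grad f x)"

definition prob_solution :: "(real^'n \<Rightarrow> real^'n^'n) \<Rightarrow> (real^'n \<Rightarrow> real^'n) \<Rightarrow>
    (real^'n::finite) measure \<Rightarrow> bool" where
  "prob_solution A b \<mu> \<longleftrightarrow>
     prob_space \<mu> \<and> sets \<mu> = sets borel \<and>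
     (\<forall>K. compact K \<longrightarrow>
        (\<forall>i j. set_integrable \<mu> K (\<lambda>x. A x $ i $ j)) \<and>
        (\<forall>i. set_integrable \<mu> K (\<lambda>x. b x $ i))) \<and>
     (\<forall>f. test_fun f \<longrightarrow> (\<integral>x. gen_op A b f x \<partial>\<mu>) = 0)"

end

theory Submission
  imports Defs
begin

text \<open>
  Let \<open>\<mu>\<close> and \<open>\<nu>\<close> be two such solutions and integrate the coupling cost
  \<open>F x y = \<parallel>\<Sigma> x - \<Sigma> y\<parallel>\<^sup>2 + \<langle>x - y, b x - b y\<rangle>\<close>, which the hypotheses make positive off the
  diagonal, against \<open>\<mu> \<Otimes> \<nu>\<close>. Testing \<open>L\<^sup>* \<mu> = 0\<close> against smooth compactly supported
  truncations of \<open>|x - z|\<^sup>2\<close> and removing the truncation by dominated convergence (licensed by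
  the moment condition) gives \<open>\<integral> \<parallel>\<Sigma>\<parallel>\<^sup>2 + \<langle>b x, x - z\<rangle> d\<mu> = 0\<close> for every \<open>z\<close>. Since the
  lower bound on \<open>\<Sigma>\<close> makes \<open>|x|\<close> integrable as well, \<open>F\<close> can be expanded and integrated term by
  term: \<open>\<integral>\<integral> F d\<nu> d\<mu> = -2 \<langle>\<integral> \<Sigma> d\<mu>, \<integral> \<Sigma> d\<nu>\<rangle>\<close>. For \<open>\<nu> = \<mu>\<close> this forces \<open>\<integral> \<Sigma> d\<mu> = 0\<close>;
  hence \<open>\<integral>\<integral> F = 0\<close>, so \<open>\<mu> \<Otimes> \<nu>\<close> is concentrated on the diagonal and \<open>\<mu> = \<nu>\<close>.
\<close>

text \<open>The derivatives of the flat function \<open>exp (-1/s)\<close> are combinations of the \<open>flat_exp k\<close>.\<close>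

definition flat_exp :: "nat \<Rightarrow> real \<Rightarrow> real" where
  "flat_exp k s = (if s > 0 then exp (- inverse s) / s ^ k else 0)"

lemma flat_exp_nonpos [simp]: "s \<le> 0 \<Longrightarrow> flat_exp k s = 0"
  by (simp add: flat_exp_def)

lemma flat_exp_numeral [simp]:
  "flat_exp (Suc (Suc 0)) = flat_exp 2" "flat_exp (Suc (Suc (Suc 0))) = flat_exp 3"
  "flat_exp (Suc (Suc (Suc (Suc 0)))) = flat_exp 4"
  by (simp_all add: eval_nat_numeral)

lemma tendsto_flat_exp_0: "(flat_exp k \<longlongrightarrow> 0) (at 0)"
proof -
  have "((\<lambda>t. t ^ k / exp t) \<longlongrightarrow> (0::real)) at_top"
    by (rule tendsto_power_div_exp_0)
  from filterlim_compose[OF this filterlim_inverse_at_top_right]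
  have "((\<lambda>s. inverse s ^ k / exp (inverse s)) \<longlongrightarrow> 0) (at_right (0::real))" .
  then have "(flat_exp k \<longlongrightarrow> 0) (at_right 0)"
    by (rule Lim_transform_eventually)
       (auto simp: eventually_at_right_field flat_exp_def exp_minus field_simps
             intro!: exI[of _ 1])
  moreover have "(flat_exp k \<longlongrightarrow> 0) (at_left 0)"
    by (rule Lim_transform_eventually[OF tendsto_const])
       (auto simp: eventually_at_left_field intro!: exI[of _ "-1"])
  ultimately show ?thesis
    by (simp add: filterlim_split_at)
qed

lemma has_real_derivative_flat_exp:
  "(flat_exp k has_real_derivative - real k * flat_exp (k + 1) s + flat_exp (k + 2) s) (at s)"
proof (cases s "0::real" rule: linorder_cases)
  case less
  have "((\<lambda>_. 0) has_real_derivative - real k * flat_exp (k + 1) s + flat_exp (k + 2) s) (at s)"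
    using less by simp
  then show ?thesis
    by (rule has_field_derivative_transform_within_open[where S = "{..<0}"]) (use less in auto)
next
  case equal
  have "((\<lambda>h. (flat_exp k (0 + h) - flat_exp k 0) / h) \<longlongrightarrow> 0) (at 0)"
    by (rule Lim_transform_eventually[OF tendsto_flat_exp_0[of "k + 1"]])
       (auto simp: flat_exp_def eventually_at_filter)
  then show ?thesis
    using equal by (simp add: DERIV_def)
next
  case greater
  have "((\<lambda>s. exp (- inverse s) * inverse s ^ k) has_real_derivative
      exp (- inverse s) * inverse s ^ 2 * inverse s ^ k
        + exp (- inverse s) * (real k * inverse s ^ (k - 1) * - (inverse s ^ 2))) (at s)"
    using greater by (auto intro!: derivative_eq_intros simp: power2_eq_square)
  moreover have "exp (- inverse s) * inverse s ^ 2 * inverse s ^ k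
        + exp (- inverse s) * (real k * inverse s ^ (k - 1) * - (inverse s ^ 2))
      = - real k * flat_exp (k + 1) s + flat_exp (k + 2) s"
    using greater by (cases k) (auto simp: flat_exp_def field_simps power2_eq_square)
  moreover have "(\<lambda>s. exp (- inverse s) * inverse s ^ k) = (\<lambda>s::real. exp (- inverse s) / s ^ k)"
    by (simp add: field_simps)
  ultimately have "((\<lambda>s. exp (- inverse s) / s ^ k) has_real_derivative
      - real k * flat_exp (k + 1) s + flat_exp (k + 2) s) (at s)"
    by simp
  then show ?thesis
    by (rule has_field_derivative_transform_within_open[where S = "{0<..}"])
       (use greater in \<open>auto simp: flat_exp_def\<close>)
qed

lemma has_real_derivative_flat_exp_compose [derivative_intros]:
  "(f has_real_derivative f') (at x within S) \<Longrightarrow>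
   ((\<lambda>x. flat_exp k (f x)) has_real_derivative
      (- real k * flat_exp (k + 1) (f x) + flat_exp (k + 2) (f x)) * f') (at x within S)"
  by (rule DERIV_chain2[OF has_real_derivative_flat_exp])

lemma isCont_flat_exp: "isCont (flat_exp k) s"
  by (rule DERIV_isCont[OF has_real_derivative_flat_exp])

lemma isCont_flat_exp_compose [continuous_intros]:
  "isCont f x \<Longrightarrow> isCont (\<lambda>x. flat_exp k (f x)) x"
  by (rule isCont_o2[OF _ isCont_flat_exp])

lemma has_derivative_inner_self_diff:
  "((\<lambda>x. inner (x - z) (x - z)) has_derivative (\<lambda>h. 2 * inner h (x - z))) (at x)"
  by (rule has_derivative_eq_rhs, (rule derivative_intros)+) (auto simp: inner_commute)

text \<open>
  An algebra closed under partial derivatives, so its members are smooth without their iterated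
  derivatives ever being computed.
\<close>

inductive_set bump_algebra :: "real^'n::finite \<Rightarrow> real \<Rightarrow> (real^'n \<Rightarrow> real) set"
  for z :: "real^'n" and R :: real where
  const: "(\<lambda>x. c) \<in> bump_algebra z R"
| coord: "(\<lambda>x. x $ i) \<in> bump_algebra z R"
| flat_exp: "(\<lambda>x. flat_exp k (1 - inner (x - z) (x - z) / R\<^sup>2)) \<in> bump_algebra z R"
| add: "f \<in> bump_algebra z R \<Longrightarrow> g \<in> bump_algebra z R \<Longrightarrow> (\<lambda>x. f x + g x) \<in> bump_algebra z R"
| mult: "f \<in> bump_algebra z R \<Longrightarrow> g \<in> bump_algebra z R \<Longrightarrow> (\<lambda>x. f x * g x) \<in> bump_algebra z R"

lemma bump_algebra_sum:
  "finite I \<Longrightarrow> (\<And>i. i \<in> I \<Longrightarrow> f i \<in> bump_algebra z R) \<Longrightarrow> (\<lambda>x. \<Sum>i\<in>I. f i x) \<in> bump_algebra z R"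
  by (induction I rule: finite_induct) (auto intro: bump_algebra.intros)

lemma bump_algebra_has_derivative:
  assumes "f \<in> bump_algebra z R"
  shows "\<exists>f'. (\<forall>x. (f has_derivative f' x) (at x)) \<and> (\<forall>i. (\<lambda>x. f' x (axis i 1)) \<in> bump_algebra z R)"
  using assms
proof induction
  case (const c)
  show ?case
    by (rule exI[of _ "\<lambda>x h. 0"]) (auto intro: bump_algebra.intros)
next
  case (coord j)
  show ?case
    by (rule exI[of _ "\<lambda>x h. h $ j"])
       (auto intro!: bump_algebra.intros bounded_linear_imp_has_derivative)
next
  case (flat_exp k)
  let ?q = "\<lambda>x. 1 - inner (x - z) (x - z) / R\<^sup>2"
  let ?D = "\<lambda>x h. - (2 * inner h (x - z) / R\<^sup>2)
                 * (- real k * flat_exp (k + 1) (?q x) + flat_exp (k + 2) (?q x))"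
  have "(?q has_derivative (\<lambda>h. - (2 * inner h (x - z) / R\<^sup>2))) (at x)" for x
  proof -
    have "((\<lambda>x. 1 - inverse (R\<^sup>2) * inner (x - z) (x - z)) has_derivative
        (\<lambda>h. 0 - inverse (R\<^sup>2) * (2 * inner h (x - z)))) (at x)"
      by (intro derivative_intros has_derivative_inner_self_diff)
    then show ?thesis
      by (simp add: divide_inverse mult.commute)
  qed
  then have deriv: "((\<lambda>x. flat_exp k (?q x)) has_derivative ?D x) (at x)" for x
    by (rule DERIV_compose_FDERIV[OF has_real_derivative_flat_exp])
  moreover have partial: "(\<lambda>x. ?D x (axis i 1)) \<in> bump_algebra z R" for i
  proof -
    have "(\<lambda>x. ?D x (axis i 1)) = (\<lambda>x. ((- 2 / R\<^sup>2) * (x $ i + - z $ i))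
            * (- real k * flat_exp (k + 1) (?q x) + flat_exp (k + 2) (?q x)))"
      by (auto simp: inner_axis' field_simps)
    then show ?thesis
      by (simp only:) (intro bump_algebra.intros)
  qed
  ultimately show ?case
    by (intro exI[of _ ?D]) simp
next
  case (add f g)
  then obtain f' g' where
    "\<forall>x. (f has_derivative f' x) (at x)" "\<forall>i. (\<lambda>x. f' x (axis i 1)) \<in> bump_algebra z R"
    "\<forall>x. (g has_derivative g' x) (at x)" "\<forall>i. (\<lambda>x. g' x (axis i 1)) \<in> bump_algebra z R"
    by blast
  then show ?case
    by (intro exI[of _ "\<lambda>x h. f' x h + g' x h"]) (auto intro!: bump_algebra.intros has_derivative_add)
next
  case (mult f g)
  then obtain f' g' where
    "\<forall>x. (f has_derivative f' x) (at x)" "\<forall>i. (\<lambda>x. f' x (axis i 1)) \<in> bump_algebra z R"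
    "\<forall>x. (g has_derivative g' x) (at x)" "\<forall>i. (\<lambda>x. g' x (axis i 1)) \<in> bump_algebra z R"
    by blast
  then show ?case
    by (intro exI[of _ "\<lambda>x h. f x * g' x h + f' x h * g x"])
       (use mult.hyps in \<open>auto intro!: bump_algebra.intros has_derivative_mult\<close>)
qed

lemma iter_partial_bump_algebra: "f \<in> bump_algebra z R \<Longrightarrow> iter_partial is f \<in> bump_algebra z R"
proof (induction "is")
  case (Cons i "is")
  then obtain f' where f': "\<forall>x. (iter_partial is f has_derivative f' x) (at x)"
    and "\<forall>i. (\<lambda>x. f' x (axis i 1)) \<in> bump_algebra z R"
    using bump_algebra_has_derivative by blast
  moreover have "iter_partial (i # is) f = (\<lambda>x. f' x (axis i 1))"
    using frechet_derivative_at[OF f'[rule_format]] by auto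
  ultimately show ?case
    by simp
qed simp

lemma smooth_bump_algebra: "f \<in> bump_algebra z R \<Longrightarrow> smooth f"
  unfolding smooth_def
proof (intro allI conjI)
  fix "is"
  assume "f \<in> bump_algebra z R"
  then obtain f' where f': "\<forall>x. (iter_partial is f has_derivative f' x) (at x)"
    using bump_algebra_has_derivative iter_partial_bump_algebra by blast
  then show "iter_partial is f differentiable_on UNIV"
    by (auto simp: differentiable_on_def differentiable_def)
  show "continuous_on UNIV (iter_partial is f)"
    using f' by (auto intro!: continuous_at_imp_continuous_on has_derivative_continuous)
qed

definition cutoff :: "real \<Rightarrow> real" where
  "cutoff t = exp 1 * t * flat_exp 0 (1 - t)"

definition cutoff_deriv :: "real \<Rightarrow> real" where
  "cutoff_deriv t = exp 1 * (flat_exp 0 (1 - t) - t * flat_exp 2 (1 - t))"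

definition cutoff_deriv2 :: "real \<Rightarrow> real" where
  "cutoff_deriv2 t = exp 1 * (- 2 * flat_exp 2 (1 - t) + t * (- 2 * flat_exp 3 (1 - t) + flat_exp 4 (1 - t)))"

lemma cutoff_eq_0: "1 \<le> t \<Longrightarrow> cutoff t = 0"
  by (simp add: cutoff_def)

lemma has_real_derivative_cutoff: "(cutoff has_real_derivative cutoff_deriv t) (at t)"
  unfolding cutoff_def cutoff_deriv_def
  by (auto intro!: derivative_eq_intros simp: field_simps)

lemma has_real_derivative_cutoff_deriv: "(cutoff_deriv has_real_derivative cutoff_deriv2 t) (at t)"
  unfolding cutoff_deriv_def cutoff_deriv2_def
  by (auto intro!: derivative_eq_intros simp: field_simps)

lemma cutoff_deriv_0 [simp]: "cutoff_deriv 0 = 1"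
  by (simp add: cutoff_deriv_def flat_exp_def exp_minus)

lemma isCont_cutoff_deriv: "isCont cutoff_deriv t"
  by (rule DERIV_isCont[OF has_real_derivative_cutoff_deriv])

lemma isCont_cutoff_deriv2: "isCont cutoff_deriv2 t"
  unfolding cutoff_deriv2_def by (intro continuous_intros)

lemma borel_measurable_cutoff_deriv [measurable]: "cutoff_deriv \<in> borel_measurable borel"
  by (intro borel_measurable_continuous_onI continuous_at_imp_continuous_on ballI isCont_cutoff_deriv)

lemma borel_measurable_cutoff_deriv2 [measurable]: "cutoff_deriv2 \<in> borel_measurable borel"
  by (intro borel_measurable_continuous_onI continuous_at_imp_continuous_on ballI isCont_cutoff_deriv2)

lemma bounded_if_vanishing_beyond:
  fixes f :: "real \<Rightarrow> 'a::real_normed_vector"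
  assumes "continuous_on {a..b} f" and "\<And>t. b \<le> t \<Longrightarrow> f t = 0"
  shows "\<exists>K. \<forall>t\<ge>a. norm (f t) \<le> K"
proof -
  have "bounded (f ` {a..b})"
    by (intro compact_imp_bounded compact_continuous_image assms(1) compact_Icc)
  then obtain K where K: "\<forall>t\<in>{a..b}. norm (f t) \<le> K"
    by (auto simp: bounded_iff)
  have "norm (f t) \<le> max K 0" if "a \<le> t" for t
    using K assms(2)[of t] that by (cases "t \<le> b") force+
  then show ?thesis
    by blast
qed

lemma cutoff_deriv_bounded: "\<exists>K. \<forall>t\<ge>0. \<bar>cutoff_deriv t\<bar> \<le> K"
  using bounded_if_vanishing_beyond[of 0 1 cutoff_deriv]
    continuous_at_imp_continuous_on[OF ballI, OF isCont_cutoff_deriv]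
  by (simp add: cutoff_deriv_def)

lemma cutoff_deriv2_bounded: "\<exists>K. \<forall>t\<ge>0. \<bar>t * cutoff_deriv2 t\<bar> \<le> K"
proof -
  have "continuous_on {0..1} (\<lambda>t. t * cutoff_deriv2 t)"
    by (intro continuous_at_imp_continuous_on ballI continuous_intros isCont_cutoff_deriv2)
  then show ?thesis
    using bounded_if_vanishing_beyond[of 0 1 "\<lambda>t. t * cutoff_deriv2 t"]
    by (auto simp: cutoff_deriv2_def)
qed

lemma iter_partial_radial:
  fixes \<phi> :: "real \<Rightarrow> real" and z :: "real^'n::finite"
  assumes "\<And>r. (\<phi> has_real_derivative \<phi>' r) (at r)"
  shows "iter_partial [j] (\<lambda>x. \<phi> (inner (x - z) (x - z)))
    = (\<lambda>x. 2 * (x - z) $ j * \<phi>' (inner (x - z) (x - z)))"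
proof
  fix x :: "real^'n"
  have "((\<lambda>x. \<phi> (inner (x - z) (x - z))) has_derivative
      (\<lambda>h. 2 * inner h (x - z) * \<phi>' (inner (x - z) (x - z)))) (at x)"
    by (rule DERIV_compose_FDERIV[OF assms has_derivative_inner_self_diff])
  then show "iter_partial [j] (\<lambda>x. \<phi> (inner (x - z) (x - z))) x
      = 2 * (x - z) $ j * \<phi>' (inner (x - z) (x - z))"
    by (simp add: frechet_derivative_at[symmetric] inner_axis')
qed

lemma iter_partial2_radial:
  fixes \<phi> :: "real \<Rightarrow> real" and z :: "real^'n::finite"
  assumes \<phi>': "\<And>r. (\<phi> has_real_derivative \<phi>' r) (at r)"
    and \<phi>'': "\<And>r. (\<phi>' has_real_derivative \<phi>'' r) (at r)"
  shows "iter_partial [i, j] (\<lambda>x. \<phi> (inner (x - z) (x - z))) x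
    = 2 * (if i = j then 1 else 0) * \<phi>' (inner (x - z) (x - z))
      + 4 * (x - z) $ i * (x - z) $ j * \<phi>'' (inner (x - z) (x - z))"
proof -
  let ?r = "inner (x - z) (x - z)"
  have "((\<lambda>x. 2 * (x $ j - z $ j)) has_derivative (\<lambda>h. 2 * (h $ j - 0))) (at x)"
    by (intro derivative_intros bounded_linear_imp_has_derivative bounded_linear_vec_nth)
  from has_derivative_mult[OF this DERIV_compose_FDERIV[OF \<phi>'' has_derivative_inner_self_diff]]
  have "((\<lambda>x. 2 * (x - z) $ j * \<phi>' (inner (x - z) (x - z))) has_derivative
      (\<lambda>h. 2 * (x - z) $ j * (2 * inner h (x - z) * \<phi>'' ?r) + 2 * h $ j * \<phi>' ?r)) (at x)"
    by simp
  note second = frechet_derivative_at[OF this, symmetric]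
  have "iter_partial [i, j] (\<lambda>x. \<phi> (inner (x - z) (x - z))) x
      = frechet_derivative (\<lambda>x. 2 * (x - z) $ j * \<phi>' (inner (x - z) (x - z))) (at x) (axis i 1)"
    by (subst iter_partial.simps(2)) (simp only: iter_partial_radial[OF \<phi>'])
  also have "\<dots> = 2 * (x - z) $ j * (2 * inner (axis i 1) (x - z) * \<phi>'' ?r) + 2 * axis i 1 $ j * \<phi>' ?r"
    by (simp only: second)
  also have "\<dots> = 2 * (if i = j then 1 else 0) * \<phi>' ?r + 4 * (x - z) $ i * (x - z) $ j * \<phi>'' ?r"
    by (simp add: inner_axis') (simp add: axis_def algebra_simps)
  finally show ?thesis .
qed

lemma gen_op_radial:
  fixes \<phi> :: "real \<Rightarrow> real" and z :: "real^'n::finite"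
  assumes \<phi>': "\<And>r. (\<phi> has_real_derivative \<phi>' r) (at r)"
    and \<phi>'': "\<And>r. (\<phi>' has_real_derivative \<phi>'' r) (at r)"
  shows "gen_op A b (\<lambda>x. \<phi> (inner (x - z) (x - z))) x
    = 2 * \<phi>' (inner (x - z) (x - z)) * (trace (A x) + inner (b x) (x - z))
      + 4 * \<phi>'' (inner (x - z) (x - z)) * inner (x - z) (A x *v (x - z))"
proof -
  define v where "v = x - z"
  define p1 where "p1 = \<phi>' (inner v v)"
  define p2 where "p2 = \<phi>'' (inner v v)"
  have hess: "hess (\<lambda>x. \<phi> (inner (x - z) (x - z))) x $ k $ i
      = 2 * (if k = i then 1 else 0) * p1 + 4 * v $ k * v $ i * p2" for k i
    by (simp add: hess_def iter_partial2_radial[OF \<phi>' \<phi>''] p1_def p2_def v_def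
        del: iter_partial.simps)
  have "trace (A x ** hess (\<lambda>x. \<phi> (inner (x - z) (x - z))) x)
      = (\<Sum>i\<in>UNIV. \<Sum>k\<in>UNIV. A x $ i $ k * (2 * (if k = i then 1 else 0) * p1 + 4 * v $ k * v $ i * p2))"
    by (simp add: trace_def matrix_matrix_mult_def hess)
  also have "\<dots> = (\<Sum>i\<in>UNIV. 2 * p1 * A x $ i $ i) + 4 * p2 * (\<Sum>i\<in>UNIV. v $ i * (\<Sum>k\<in>UNIV. A x $ i $ k * v $ k))"
  proof -
    have "A x $ i $ k * (2 * (if k = i then 1 else 0) * p1 + 4 * v $ k * v $ i * p2)
        = (if k = i then 2 * p1 * A x $ i $ i else 0) + 4 * p2 * (v $ i * (A x $ i $ k * v $ k))" for i k
      by (auto simp: algebra_simps)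
    then show ?thesis
      by (simp add: sum.distrib sum_distrib_left)
  qed
  also have "\<dots> = 2 * p1 * trace (A x) + 4 * p2 * inner v (A x *v v)"
    by (simp add: trace_def inner_vec_def matrix_vector_mult_def sum_distrib_left)
  finally have "trace (A x ** hess (\<lambda>x. \<phi> (inner (x - z) (x - z))) x)
      = 2 * p1 * trace (A x) + 4 * p2 * inner v (A x *v v)" .
  moreover have "inner (b x) (grad (\<lambda>x. \<phi> (inner (x - z) (x - z))) x) = 2 * p1 * inner (b x) v"
    unfolding grad_def iter_partial_radial[OF \<phi>'] v_def[symmetric] p1_def[symmetric]
    by (simp add: inner_vec_def sum_distrib_left algebra_simps)
  ultimately show ?thesis
    by (simp add: gen_op_def p1_def p2_def v_def algebra_simps)
qed

text \<open>The test functions \<open>\<lambda>x. scaled_cutoff R \<langle>x - z, x - z\<rangle>\<close> tend to \<open>|x - z|\<^sup>2\<close> as \<open>R \<rightarrow> \<infinity>\<close>.\<close>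

definition scaled_cutoff :: "real \<Rightarrow> real \<Rightarrow> real" where
  "scaled_cutoff R r = R\<^sup>2 * cutoff (r / R\<^sup>2)"

lemma has_real_derivative_scaled_cutoff:
  "R \<noteq> 0 \<Longrightarrow> (scaled_cutoff R has_real_derivative cutoff_deriv (r / R\<^sup>2)) (at r)"
  unfolding scaled_cutoff_def
  by (auto intro!: derivative_eq_intros DERIV_chain2[OF has_real_derivative_cutoff]
      simp: field_simps eval_nat_numeral)

lemma has_real_derivative_cutoff_deriv_scaled:
  "R \<noteq> 0 \<Longrightarrow> ((\<lambda>r. cutoff_deriv (r / R\<^sup>2)) has_real_derivative cutoff_deriv2 (r / R\<^sup>2) / R\<^sup>2) (at r)"
  by (rule DERIV_chain2[OF has_real_derivative_cutoff_deriv, THEN DERIV_cong])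
     (auto intro!: derivative_eq_intros simp: field_simps eval_nat_numeral)

lemma test_fun_scaled_cutoff:
  fixes z :: "real^'n::finite"
  assumes "R \<noteq> 0"
  shows "test_fun (\<lambda>x. scaled_cutoff R (inner (x - z) (x - z)))"
  unfolding test_fun_def
proof
  have "(\<lambda>x. scaled_cutoff R (inner (x - z) (x - z)))
      = (\<lambda>x. (exp 1 * (\<Sum>i\<in>UNIV. (x $ i + - z $ i) * (x $ i + - z $ i)))
              * flat_exp 0 (1 - inner (x - z) (x - z) / R\<^sup>2))"
    using assms by (auto simp: scaled_cutoff_def cutoff_def inner_vec_def)
  also have "\<dots> \<in> bump_algebra z R"
    by (intro bump_algebra.intros bump_algebra_sum) auto
  finally show "smooth (\<lambda>x. scaled_cutoff R (inner (x - z) (x - z)))"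
    by (rule smooth_bump_algebra)
  have "{x. scaled_cutoff R (inner (x - z) (x - z)) \<noteq> 0} \<subseteq> cball z \<bar>R\<bar>"
  proof
    fix x
    assume x: "x \<in> {x. scaled_cutoff R (inner (x - z) (x - z)) \<noteq> 0}"
    have "\<not> R\<^sup>2 < (norm (x - z))\<^sup>2"
    proof
      assume "R\<^sup>2 < (norm (x - z))\<^sup>2"
      then have "cutoff (inner (x - z) (x - z) / R\<^sup>2) = 0"
        using assms by (intro cutoff_eq_0) (simp add: power2_norm_eq_inner field_simps)
      then show False
        using x by (simp add: scaled_cutoff_def)
    qed
    then show "x \<in> cball z \<bar>R\<bar>"
      using abs_le_square_iff[of "norm (x - z)" R] by (simp add: dist_norm norm_minus_commute)
  qed
  then show "compact (closure {x. scaled_cutoff R (inner (x - z) (x - z)) \<noteq> 0})"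
    using bounded_subset[OF bounded_cball] by simp
qed

lemma trace_mult_transpose_self: "trace (S ** transpose S) = (norm S)\<^sup>2"
  for S :: "real^'m::finite^'n::finite"
  by (simp add: trace_def matrix_matrix_mult_def transpose_def power2_norm_eq_inner inner_vec_def)

lemma norm_transpose: "norm (transpose A) = norm A"
  for A :: "real^'m::finite^'n::finite"
proof -
  have "(norm (transpose A))\<^sup>2 = (\<Sum>j\<in>UNIV. \<Sum>i\<in>UNIV. A $ i $ j * A $ i $ j)"
    by (simp add: power2_norm_eq_inner inner_vec_def transpose_def)
  also have "\<dots> = (norm A)\<^sup>2"
    by (subst sum.swap) (simp add: power2_norm_eq_inner inner_vec_def)
  finally have "(norm (transpose A))\<^sup>2 = (norm A)\<^sup>2" .
  then show ?thesis
    by simp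
qed

lemma norm_matrix_vector_mult_le: "norm (A *v x) \<le> norm A * norm x"
  for A :: "real^'m::finite^'n::finite"
proof (rule power2_le_imp_le)
  have "(norm (A *v x))\<^sup>2 = (\<Sum>i\<in>UNIV. (inner (A $ i) x)\<^sup>2)"
    unfolding power2_norm_eq_inner by (simp add: inner_vec_def matrix_vector_mult_def power2_eq_square)
  also have "\<dots> \<le> (\<Sum>i\<in>UNIV. inner (A $ i) (A $ i) * inner x x)"
    by (intro sum_mono Cauchy_Schwarz_ineq)
  also have "\<dots> = (norm A * norm x)\<^sup>2"
    by (simp add: power_mult_distrib power2_norm_eq_inner inner_vec_def[of A A] sum_distrib_right)
  finally show "(norm (A *v x))\<^sup>2 \<le> (norm A * norm x)\<^sup>2" .
qed simp

lemma norm_vector_matrix_mult_le: "norm (x v* A) \<le> norm x * norm A"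
  for A :: "real^'m::finite^'n::finite"
  using norm_matrix_vector_mult_le[of "transpose A" x] by (simp add: norm_transpose mult.commute)

lemma inner_mult_transpose_self: "inner v ((S ** transpose S) *v v) = (norm (v v* S))\<^sup>2"
  for S :: "real^'m::finite^'n::finite"
  by (simp add: matrix_vector_mul_assoc[symmetric] dot_lmul_matrix[symmetric] power2_norm_eq_inner)

lemma borel_measurable_vec_nth [measurable (raw)]:
  fixes f :: "'a \<Rightarrow> 'b::real_normed_vector^'n::finite"
  assumes "f \<in> borel_measurable M"
  shows "(\<lambda>x. f x $ i) \<in> borel_measurable M"
proof -
  have "(\<lambda>y::'b^'n. y $ i) \<in> borel_measurable borel"
    by (intro borel_measurable_continuous_onI linear_continuous_on bounded_linear_vec_nth)
  from measurable_compose[OF assms this] show ?thesis .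
qed

lemma borel_measurable_vector_matrix_mult [measurable (raw)]:
  fixes v :: "'a \<Rightarrow> real^'n::finite" and A :: "'a \<Rightarrow> real^'m::finite^'n"
  assumes [measurable]: "v \<in> borel_measurable M" "A \<in> borel_measurable M"
  shows "(\<lambda>x. v x v* A x) \<in> borel_measurable M"
proof (subst borel_measurable_euclidean_space, intro ballI)
  fix e :: "real^'m"
  assume "e \<in> Basis"
  then obtain j where "e = axis j 1"
    by (auto simp: Basis_vec_def)
  then show "(\<lambda>x. inner (v x v* A x) e) \<in> borel_measurable M"
    by (simp add: inner_axis vector_matrix_mult_def)
qed

lemma gen_op_scaled_cutoff:
  fixes S :: "real^'n::finite \<Rightarrow> real^'m::finite^'n"
  assumes "R \<noteq> 0"
  shows "gen_op (\<lambda>x. S x ** transpose (S x)) b (\<lambda>x. scaled_cutoff R (inner (x - z) (x - z))) x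
    = 2 * cutoff_deriv (inner (x - z) (x - z) / R\<^sup>2) * ((norm (S x))\<^sup>2 + inner (b x) (x - z))
      + 4 * (cutoff_deriv2 (inner (x - z) (x - z) / R\<^sup>2) / R\<^sup>2)
          * (norm ((x - z) v* S x))\<^sup>2"
  by (simp add: gen_op_radial[OF has_real_derivative_scaled_cutoff[OF assms]
        has_real_derivative_cutoff_deriv_scaled[OF assms]]
      trace_mult_transpose_self inner_mult_transpose_self)

lemma abs_gen_op_scaled_cutoff_le:
  fixes S :: "real^'n::finite \<Rightarrow> real^'m::finite^'n"
  assumes R: "R \<noteq> 0"
    and K1: "\<forall>t\<ge>0. \<bar>cutoff_deriv t\<bar> \<le> K1" and K2: "\<forall>t\<ge>0. \<bar>t * cutoff_deriv2 t\<bar> \<le> K2"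
  shows "\<bar>gen_op (\<lambda>x. S x ** transpose (S x)) b (\<lambda>x. scaled_cutoff R (inner (x - z) (x - z))) x\<bar>
    \<le> 2 * K1 * ((norm (S x))\<^sup>2 + norm (b x) * norm (x - z)) + 4 * K2 * (norm (S x))\<^sup>2"
proof -
  define t where "t = inner (x - z) (x - z) / R\<^sup>2"
  have t: "0 \<le> t"
    by (simp add: t_def)
  define X where "X = cutoff_deriv t * ((norm (S x))\<^sup>2 + inner (b x) (x - z))"
  define Y where "Y = cutoff_deriv2 t / R\<^sup>2 * (norm ((x - z) v* S x))\<^sup>2"
  have "\<bar>X\<bar> \<le> K1 * ((norm (S x))\<^sup>2 + norm (b x) * norm (x - z))"
    unfolding X_def abs_mult
    by (intro mult_mono K1[rule_format, OF t] order_trans[OF abs_triangle_ineq]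
        add_mono Cauchy_Schwarz_ineq2) (auto simp: order_trans[OF abs_ge_zero K1[rule_format, OF t]])
  moreover have "\<bar>Y\<bar> \<le> K2 * (norm (S x))\<^sup>2"
  proof -
    have "(norm ((x - z) v* S x))\<^sup>2 \<le> (norm (x - z) * norm (S x))\<^sup>2"
      by (intro power_mono norm_vector_matrix_mult_le) simp
    also have "\<dots> = (norm (S x))\<^sup>2 * (R\<^sup>2 * t)"
      using R by (simp add: t_def power_mult_distrib power2_norm_eq_inner)
    finally have quad: "(norm ((x - z) v* S x))\<^sup>2 \<le> (norm (S x))\<^sup>2 * (R\<^sup>2 * t)" .
    have "\<bar>Y\<bar> = \<bar>cutoff_deriv2 t\<bar> * (norm ((x - z) v* S x))\<^sup>2 / R\<^sup>2"
      by (simp add: Y_def abs_mult)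
    also have "\<dots> \<le> \<bar>cutoff_deriv2 t\<bar> * ((norm (S x))\<^sup>2 * (R\<^sup>2 * t)) / R\<^sup>2"
      by (intro divide_right_mono mult_left_mono quad) auto
    also have "\<dots> = \<bar>t * cutoff_deriv2 t\<bar> * (norm (S x))\<^sup>2"
      using R t by (simp add: abs_mult field_simps)
    also have "\<dots> \<le> K2 * (norm (S x))\<^sup>2"
      using K2 t by (simp add: mult_right_mono)
    finally show ?thesis .
  qed
  moreover have "gen_op (\<lambda>x. S x ** transpose (S x)) b (\<lambda>x. scaled_cutoff R (inner (x - z) (x - z))) x
      = 2 * X + 4 * Y"
    by (simp only: gen_op_scaled_cutoff[OF R] t_def X_def Y_def mult.assoc)
  ultimately show ?thesis
    using abs_triangle_ineq[of "2 * X" "4 * Y"] by (simp add: abs_mult)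
qed

lemma tendsto_gen_op_scaled_cutoff:
  fixes S :: "real^'n::finite \<Rightarrow> real^'m::finite^'n"
  shows "(\<lambda>n. gen_op (\<lambda>x. S x ** transpose (S x)) b
            (\<lambda>x. scaled_cutoff (real (Suc n)) (inner (x - z) (x - z))) x)
    \<longlonglongrightarrow> 2 * ((norm (S x))\<^sup>2 + inner (b x) (x - z))"
proof -
  have vanish: "(\<lambda>n. c / (real (Suc n))\<^sup>2) \<longlonglongrightarrow> 0" for c
  proof -
    have "(\<lambda>n. c * inverse (real (Suc n)) ^ 2) \<longlonglongrightarrow> c * 0 ^ 2"
      by (intro tendsto_intros LIMSEQ_inverse_real_of_nat)
    then show ?thesis
      by (simp add: field_simps)
  qed
  let ?t = "\<lambda>n. inner (x - z) (x - z) / (real (Suc n))\<^sup>2"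
  have t: "?t \<longlonglongrightarrow> 0"
    by (rule vanish)
  have "(\<lambda>n. cutoff_deriv2 (?t n) * (1 / (real (Suc n))\<^sup>2)) \<longlonglongrightarrow> cutoff_deriv2 0 * 0"
    by (intro tendsto_mult isCont_tendsto_compose[OF isCont_cutoff_deriv2 t] vanish)
  then have "(\<lambda>n. 2 * cutoff_deriv (?t n) * ((norm (S x))\<^sup>2 + inner (b x) (x - z))
        + 4 * (cutoff_deriv2 (?t n) / (real (Suc n))\<^sup>2) * (norm ((x - z) v* S x))\<^sup>2)
    \<longlonglongrightarrow> 2 * cutoff_deriv 0 * ((norm (S x))\<^sup>2 + inner (b x) (x - z))
        + 4 * (cutoff_deriv2 0 * 0) * (norm ((x - z) v* S x))\<^sup>2"
    by (intro tendsto_intros isCont_tendsto_compose[OF isCont_cutoff_deriv t]) simp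
  then show ?thesis
    by (simp add: gen_op_scaled_cutoff del: of_nat_Suc)
qed

locale moment_solution =
  fixes S :: "real^'n::finite \<Rightarrow> real^'m::finite^'n" and b :: "real^'n \<Rightarrow> real^'n"
    and \<mu> :: "(real^'n) measure"
  assumes solution: "prob_solution (\<lambda>x. S x ** transpose (S x)) b \<mu>"
    and borel_measurable_S [measurable]: "S \<in> borel_measurable borel"
    and borel_measurable_b [measurable]: "b \<in> borel_measurable borel"
    and integrable_norm_S_sq: "integrable \<mu> (\<lambda>x. (norm (S x))\<^sup>2)"
    and integrable_norm_b_mult_norm: "integrable \<mu> (\<lambda>x. norm (b x) * norm x)"
    and integrable_norm: "integrable \<mu> norm"
begin

sublocale prob_space \<mu>
  using solution by (simp add: prob_solution_def)

lemma sets_eq [measurable_cong]: "sets \<mu> = sets borel"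
  using solution by (simp add: prob_solution_def)

lemma space_eq [simp]: "space \<mu> = UNIV"
  using sets_eq_imp_space_eq[OF sets_eq] by simp

lemma prob_UNIV [simp]: "prob UNIV = 1"
  using prob_space by simp

lemma integral_gen_op_eq_0:
  "test_fun f \<Longrightarrow> (\<integral>x. gen_op (\<lambda>x. S x ** transpose (S x)) b f x \<partial>\<mu>) = 0"
  using solution by (simp add: prob_solution_def)

lemma integrable_norm_b: "integrable \<mu> (\<lambda>x. norm (b x))"
proof -
  let ?K = "cball (0::real^'n) 1"
  have "integrable \<mu> (\<lambda>x. indicator ?K x *\<^sub>R b x $ i)" for i
    using solution by (auto simp: prob_solution_def set_integrable_def)
  then have "integrable \<mu> (\<lambda>x. norm (b x) * norm x + (\<Sum>i\<in>UNIV. \<bar>indicator ?K x *\<^sub>R b x $ i\<bar>))"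
    by (intro Bochner_Integration.integrable_add integrable_norm_b_mult_norm
        Bochner_Integration.integrable_sum integrable_abs)
  then show ?thesis
  proof (rule Bochner_Integration.integrable_bound)
    show "AE x in \<mu>. norm (norm (b x))
        \<le> norm (norm (b x) * norm x + (\<Sum>i\<in>UNIV. \<bar>indicator ?K x *\<^sub>R b x $ i\<bar>))"
    proof (rule AE_I2)
      fix x
      have "norm (b x) \<le> norm (b x) * norm x + (\<Sum>i\<in>UNIV. \<bar>indicator ?K x *\<^sub>R b x $ i\<bar>)"
      proof (cases "x \<in> ?K")
        case True
        then show ?thesis
          using norm_le_l1_cart[of "b x"] by (simp add: add_increasing)
      next
        case False
        then have "norm (b x) * 1 \<le> norm (b x) * norm x"
          by (intro mult_left_mono) auto
        then show ?thesis
          by (simp add: sum_nonneg add_increasing2)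
      qed
      then show "norm (norm (b x))
          \<le> norm (norm (b x) * norm x + (\<Sum>i\<in>UNIV. \<bar>indicator ?K x *\<^sub>R b x $ i\<bar>))"
        by (simp add: sum_nonneg)
    qed
  qed measurable
qed

lemma integrable_b: "integrable \<mu> b"
  by (rule Bochner_Integration.integrable_bound[OF integrable_norm_b]) auto

lemma integrable_S: "integrable \<mu> S"
proof -
  have "integrable \<mu> (\<lambda>x. norm (S x))"
    by (rule square_integrable_imp_integrable[OF _ integrable_norm_S_sq]) measurable
  then show ?thesis
    by (simp add: integrable_norm_iff)
qed

lemma integrable_ident: "integrable \<mu> (\<lambda>x. x)"
  by (rule Bochner_Integration.integrable_bound[OF integrable_norm]) auto

lemma integrable_inner_b: "integrable \<mu> (\<lambda>x. inner (b x) x)"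
  by (rule Bochner_Integration.integrable_bound[OF integrable_norm_b_mult_norm])
     (auto simp: Cauchy_Schwarz_ineq2)

theorem integral_norm_S_sq_add_inner_b_eq_0:
  "(\<integral>x. (norm (S x))\<^sup>2 + inner (b x) (x - z) \<partial>\<mu>) = 0"
proof -
  let ?L = "\<lambda>n. gen_op (\<lambda>x. S x ** transpose (S x)) b
    (\<lambda>x. scaled_cutoff (real (Suc n)) (inner (x - z) (x - z)))"
  obtain K1 K2 where K1: "\<forall>t\<ge>0. \<bar>cutoff_deriv t\<bar> \<le> K1" and K2: "\<forall>t\<ge>0. \<bar>t * cutoff_deriv2 t\<bar> \<le> K2"
    using cutoff_deriv_bounded cutoff_deriv2_bounded by blast
  have R: "real (Suc n) \<noteq> 0" for n
    by simp
  define w where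
    "w x = 2 * K1 * ((norm (S x))\<^sup>2 + norm (b x) * (norm x + norm z)) + 4 * K2 * (norm (S x))\<^sup>2" for x
  have "(\<lambda>n. \<integral>x. ?L n x \<partial>\<mu>) \<longlonglongrightarrow> (\<integral>x. 2 * ((norm (S x))\<^sup>2 + inner (b x) (x - z)) \<partial>\<mu>)"
  proof (rule integral_dominated_convergence[where w = w])
    show "integrable \<mu> w"
      unfolding w_def distrib_left
      by (intro Bochner_Integration.integrable_add integrable_mult_right integrable_norm_S_sq
          integrable_norm_b_mult_norm integrable_mult_left integrable_norm_b)
    show "?L n \<in> borel_measurable \<mu>" for n
      unfolding gen_op_scaled_cutoff[OF R, abs_def] by measurable
    show "AE x in \<mu>. norm (?L n x) \<le> w x" for n
    proof (rule AE_I2)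
      fix x
      have "0 \<le> K1"
        using K1 abs_ge_zero order_trans by blast
      then have "2 * K1 * (norm (b x) * norm (x - z)) \<le> 2 * K1 * (norm (b x) * (norm x + norm z))"
        by (intro mult_left_mono norm_triangle_ineq4) auto
      moreover have "\<bar>?L n x\<bar>
          \<le> 2 * K1 * ((norm (S x))\<^sup>2 + norm (b x) * norm (x - z)) + 4 * K2 * (norm (S x))\<^sup>2"
        by (rule abs_gen_op_scaled_cutoff_le[OF R K1 K2])
      ultimately show "norm (?L n x) \<le> w x"
        by (simp add: w_def distrib_left)
    qed
    show "AE x in \<mu>. (\<lambda>n. ?L n x) \<longlonglongrightarrow> 2 * ((norm (S x))\<^sup>2 + inner (b x) (x - z))"
      by (intro AE_I2 tendsto_gen_op_scaled_cutoff)
  qed measurable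
  moreover have "(\<integral>x. ?L n x \<partial>\<mu>) = 0" for n
    by (rule integral_gen_op_eq_0[OF test_fun_scaled_cutoff[OF R]])
  ultimately have "(\<integral>x. 2 * ((norm (S x))\<^sup>2 + inner (b x) (x - z)) \<partial>\<mu>) = 0"
    by (simp only: LIMSEQ_const_iff)
  then show ?thesis
    by (simp only: integral_mult_right_zero)
qed

end

lemma moment_solutionI:
  fixes S :: "real^'n::finite \<Rightarrow> real^'m::finite^'n" and b :: "real^'n \<Rightarrow> real^'n"
  assumes solution: "prob_solution (\<lambda>x. S x ** transpose (S x)) b \<mu>"
    and [measurable]: "S \<in> borel_measurable borel" "b \<in> borel_measurable borel"
    and lam: "lam > 0" and coercive: "\<And>x. lam * (norm x)\<^sup>2 \<le> (norm (S x - S 0))\<^sup>2"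
    and moment: "(\<integral>\<^sup>+ x. ennreal ((norm (S x))\<^sup>2 + norm (b x) * norm x) \<partial>\<mu>) < \<infinity>"
  shows "moment_solution S b \<mu>"
proof -
  interpret prob_space \<mu>
    using solution by (simp add: prob_solution_def)
  have [measurable_cong]: "sets \<mu> = sets borel"
    using solution by (simp add: prob_solution_def)
  have integrable_le_moment: "integrable \<mu> f"
    if [measurable]: "f \<in> borel_measurable borel"
      and le: "\<And>x. 0 \<le> f x \<and> f x \<le> (norm (S x))\<^sup>2 + norm (b x) * norm x" for f
  proof (rule integrableI_bounded)
    have "(\<integral>\<^sup>+ x. ennreal (norm (f x)) \<partial>\<mu>)
        \<le> (\<integral>\<^sup>+ x. ennreal ((norm (S x))\<^sup>2 + norm (b x) * norm x) \<partial>\<mu>)"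
      using le by (intro nn_integral_mono ennreal_leI) auto
    then show "(\<integral>\<^sup>+ x. ennreal (norm (f x)) \<partial>\<mu>) < \<infinity>"
      using moment by (rule le_less_trans)
  qed measurable
  have S_sq: "integrable \<mu> (\<lambda>x. (norm (S x))\<^sup>2)"
    by (rule integrable_le_moment) auto
  have norm_sq_le: "(norm x)\<^sup>2 \<le> (2 / lam) * ((norm (S x))\<^sup>2 + (norm (S 0))\<^sup>2)" for x
  proof -
    have "lam * (norm x)\<^sup>2 \<le> (norm (S x) + norm (S 0))\<^sup>2"
      by (rule order_trans[OF coercive power_mono[OF norm_triangle_ineq4]]) simp
    also have "\<dots> \<le> 2 * ((norm (S x))\<^sup>2 + (norm (S 0))\<^sup>2)"
      using sum_squares_bound[of "norm (S x)" "norm (S 0)"] by (simp add: power2_sum)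
    finally show ?thesis
      using lam by (simp add: field_simps)
  qed
  have dominating: "integrable \<mu> (\<lambda>x. (2 / lam) * ((norm (S x))\<^sup>2 + (norm (S 0))\<^sup>2))"
    using S_sq by (intro integrable_mult_right Bochner_Integration.integrable_add integrable_const)
  have norm_sq: "integrable \<mu> (\<lambda>x. (norm x)\<^sup>2)"
  proof (rule Bochner_Integration.integrable_bound[OF dominating])
    have "norm ((norm x)\<^sup>2) \<le> norm ((2 / lam) * ((norm (S x))\<^sup>2 + (norm (S 0))\<^sup>2))" for x
      using norm_sq_le[of x] abs_ge_self[of "(2 / lam) * ((norm (S x))\<^sup>2 + (norm (S 0))\<^sup>2)"]
      unfolding real_norm_def abs_power2 by linarith
    then show "AE x in \<mu>. norm ((norm x)\<^sup>2) \<le> norm ((2 / lam) * ((norm (S x))\<^sup>2 + (norm (S 0))\<^sup>2))"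
      by simp
  qed measurable
  have "integrable \<mu> (\<lambda>x. norm x)"
    by (rule square_integrable_imp_integrable[OF _ norm_sq]) measurable
  moreover have "integrable \<mu> (\<lambda>x. norm (b x) * norm x)"
    by (rule integrable_le_moment) auto
  ultimately show ?thesis
    using S_sq by unfold_locales (use solution in auto)
qed

text \<open>Half the generator of the synchronous coupling of two copies of the diffusion, applied to \<open>|x - y|\<^sup>2\<close>.\<close>

definition coupling_cost ::
    "(real^'n::finite \<Rightarrow> real^'m::finite^'n) \<Rightarrow> (real^'n \<Rightarrow> real^'n) \<Rightarrow> real^'n \<Rightarrow> real^'n \<Rightarrow> real" where
  "coupling_cost S b x y = (norm (S x - S y))\<^sup>2 + inner (x - y) (b x - b y)"

lemma coupling_cost_expand:
  "coupling_cost S b x y = ((norm (S x))\<^sup>2 + inner (b x) x) - 2 * inner (S x) (S y) - inner (b x) y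
    + ((norm (S y))\<^sup>2 + inner (b y) (y - x))"
  by (simp add: coupling_cost_def power2_norm_eq_inner inner_commute algebra_simps)

context moment_solution
begin

lemma borel_measurable_coupling_cost [measurable]:
  "(\<lambda>p. coupling_cost S b (fst p) (snd p)) \<in> borel_measurable (borel \<Otimes>\<^sub>M borel)"
  unfolding coupling_cost_def by measurable

lemma integrable_norm_S_sq_add_inner_b: "integrable \<mu> (\<lambda>y. (norm (S y))\<^sup>2 + inner (b y) (y - c))"
  by (simp add: inner_diff_right integrable_norm_S_sq integrable_inner_b integrable_b)

lemma integrable_coupling_cost: "integrable \<mu> (coupling_cost S b x)"
  unfolding coupling_cost_expand[abs_def]
  by (intro Bochner_Integration.integrable_add Bochner_Integration.integrable_diff integrable_const
      integrable_mult_right integrable_inner_right integrable_S integrable_ident integrable_norm_S_sq_add_inner_b)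

lemma integral_coupling_cost:
  "(\<integral>y. coupling_cost S b x y \<partial>\<mu>)
    = ((norm (S x))\<^sup>2 + inner (b x) x) - 2 * inner (S x) (\<integral>y. S y \<partial>\<mu>) - inner (b x) (\<integral>y. y \<partial>\<mu>)"
  unfolding coupling_cost_expand
  by (simp add: integrable_S integrable_ident integrable_norm_S_sq_add_inner_b
      integral_norm_S_sq_add_inner_b_eq_0)

end

lemma (in moment_solution) integral_integral_coupling_cost:
  assumes "moment_solution S b \<nu>"
  shows "integrable \<mu> (\<lambda>x. \<integral>y. coupling_cost S b x y \<partial>\<nu>)"
    and "(\<integral>x. \<integral>y. coupling_cost S b x y \<partial>\<nu> \<partial>\<mu>) = - 2 * inner (\<integral>x. S x \<partial>\<mu>) (\<integral>y. S y \<partial>\<nu>)"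
proof -
  interpret \<nu>: moment_solution S b \<nu>
    by fact
  have inner_integral: "(\<integral>y. coupling_cost S b x y \<partial>\<nu>)
      = ((norm (S x))\<^sup>2 + inner (b x) (x - (\<integral>y. y \<partial>\<nu>))) - 2 * inner (S x) (\<integral>y. S y \<partial>\<nu>)" for x
    by (simp add: \<nu>.integral_coupling_cost inner_diff_right)
  show "integrable \<mu> (\<lambda>x. \<integral>y. coupling_cost S b x y \<partial>\<nu>)"
    unfolding inner_integral
    by (intro Bochner_Integration.integrable_diff integrable_norm_S_sq_add_inner_b integrable_mult_right
        integrable_inner_left integrable_S)
  show "(\<integral>x. \<integral>y. coupling_cost S b x y \<partial>\<nu> \<partial>\<mu>) = - 2 * inner (\<integral>x. S x \<partial>\<mu>) (\<integral>y. S y \<partial>\<nu>)"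
    unfolding inner_integral
    by (simp add: integrable_norm_S_sq_add_inner_b integrable_S integral_norm_S_sq_add_inner_b_eq_0)
qed

lemma (in moment_solution) integral_S_eq_0:
  assumes "\<And>x y. 0 \<le> coupling_cost S b x y"
  shows "(\<integral>x. S x \<partial>\<mu>) = 0"
proof -
  have "0 \<le> (\<integral>x. \<integral>y. coupling_cost S b x y \<partial>\<mu> \<partial>\<mu>)"
    using assms by (intro integral_nonneg_AE AE_I2 integral_nonneg_AE) auto
  then have "inner (\<integral>x. S x \<partial>\<mu>) (\<integral>x. S x \<partial>\<mu>) \<le> 0"
    using integral_integral_coupling_cost(2)[OF moment_solution_axioms] by simp
  then show ?thesis
    using inner_gt_zero_iff not_le by blast
qed

lemma borel_measurable_coupling_cost_pair:
  assumes "moment_solution S b \<mu>" and "moment_solution S b \<nu>"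
  shows "(\<lambda>p. coupling_cost S b (fst p) (snd p)) \<in> borel_measurable (\<mu> \<Otimes>\<^sub>M \<nu>)"
  using moment_solution.borel_measurable_coupling_cost[OF assms(1)]
  unfolding measurable_cong_sets[OF sets_pair_measure_cong[OF
      moment_solution.sets_eq[OF assms(1)] moment_solution.sets_eq[OF assms(2)]] refl] .

lemma nn_integral_coupling_cost:
  assumes \<mu>: "moment_solution S b \<mu>" and \<nu>: "moment_solution S b \<nu>"
    and nonneg: "\<And>x y. 0 \<le> coupling_cost S b x y"
  shows "(\<integral>\<^sup>+p. coupling_cost S b (fst p) (snd p) \<partial>(\<mu> \<Otimes>\<^sub>M \<nu>))
    = ennreal (- 2 * inner (\<integral>x. S x \<partial>\<mu>) (\<integral>y. S y \<partial>\<nu>))"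
proof -
  interpret \<mu>: moment_solution S b \<mu>
    by fact
  interpret \<nu>: moment_solution S b \<nu>
    by fact
  have meas: "(\<lambda>p. ennreal (coupling_cost S b (fst p) (snd p))) \<in> borel_measurable (\<mu> \<Otimes>\<^sub>M \<nu>)"
    using borel_measurable_coupling_cost_pair[OF \<mu> \<nu>] by measurable
  have "(\<integral>\<^sup>+p. coupling_cost S b (fst p) (snd p) \<partial>(\<mu> \<Otimes>\<^sub>M \<nu>))
      = (\<integral>\<^sup>+x. \<integral>\<^sup>+y. coupling_cost S b x y \<partial>\<nu> \<partial>\<mu>)"
    using \<nu>.nn_integral_fst[OF meas] by simp
  also have "\<dots> = (\<integral>\<^sup>+x. ennreal (\<integral>y. coupling_cost S b x y \<partial>\<nu>) \<partial>\<mu>)"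
    using nonneg by (intro nn_integral_cong nn_integral_eq_integral \<nu>.integrable_coupling_cost) auto
  also have "\<dots> = ennreal (\<integral>x. \<integral>y. coupling_cost S b x y \<partial>\<nu> \<partial>\<mu>)"
    using nonneg by (intro nn_integral_eq_integral \<mu>.integral_integral_coupling_cost(1)[OF \<nu>] AE_I2
        integral_nonneg_AE) auto
  finally show ?thesis
    by (simp only: \<mu>.integral_integral_coupling_cost(2)[OF \<nu>])
qed

lemma measure_eq_if_AE_diagonal:
  assumes "prob_space \<mu>" "prob_space \<nu>" "sets \<mu> = sets \<nu>"
    and diagonal: "AE p in \<mu> \<Otimes>\<^sub>M \<nu>. fst p = snd p"
  shows "\<mu> = \<nu>"
proof -
  interpret \<mu>: prob_space \<mu>
    by fact
  interpret \<nu>: prob_space \<nu>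
    by fact
  have cross: "measure \<mu> A * measure \<nu> B = 0" if AB: "A \<in> sets \<mu>" "B \<in> sets \<mu>" "A \<inter> B = {}" for A B
  proof -
    have "AE p in \<mu> \<Otimes>\<^sub>M \<nu>. \<not> (fst p \<in> A \<and> snd p \<in> B)"
      using diagonal by (rule eventually_mono) (use AB in auto)
    then have "emeasure (\<mu> \<Otimes>\<^sub>M \<nu>) {p \<in> space (\<mu> \<Otimes>\<^sub>M \<nu>). fst p \<in> A \<and> snd p \<in> B} = 0"
      by (rule emeasure_eq_0_AE)
    moreover have "{p \<in> space (\<mu> \<Otimes>\<^sub>M \<nu>). fst p \<in> A \<and> snd p \<in> B} = A \<times> B"
      using AB sets.sets_into_space assms(3) by (auto simp: space_pair_measure)
    moreover have "emeasure (\<mu> \<Otimes>\<^sub>M \<nu>) (A \<times> B) = ennreal (measure \<mu> A * measure \<nu> B)"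
      using AB assms(3)
      by (simp add: \<nu>.emeasure_pair_measure_Times \<mu>.emeasure_eq_measure \<nu>.emeasure_eq_measure
          ennreal_mult)
    ultimately show ?thesis
      by simp
  qed
  show ?thesis
  proof (rule measure_eqI)
    fix A
    assume A: "A \<in> sets \<mu>"
    then have A': "A \<in> sets \<nu>" and compl: "space \<mu> - A \<in> sets \<mu>"
      using assms(3) by auto
    have "measure \<mu> A * (1 - measure \<nu> A) = 0"
      using cross[OF A compl] \<nu>.prob_compl[OF A'] sets_eq_imp_space_eq[OF assms(3)] by simp
    moreover have "(1 - measure \<mu> A) * measure \<nu> A = 0"
      using cross[OF compl A] \<mu>.prob_compl[OF A] by (simp add: Int_commute)
    ultimately have "measure \<mu> A = measure \<nu> A"
      by auto
    then show "emeasure \<mu> A = emeasure \<nu> A"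
      by (simp add: \<mu>.emeasure_eq_measure \<nu>.emeasure_eq_measure)
  qed fact
qed

lemma AE_coupling_cost_eq_0:
  assumes \<mu>: "moment_solution S b \<mu>" and \<nu>: "moment_solution S b \<nu>"
    and nonneg: "\<And>x y. 0 \<le> coupling_cost S b x y"
  shows "AE p in \<mu> \<Otimes>\<^sub>M \<nu>. coupling_cost S b (fst p) (snd p) = 0"
proof -
  have "(\<integral>\<^sup>+p. coupling_cost S b (fst p) (snd p) \<partial>(\<mu> \<Otimes>\<^sub>M \<nu>)) = 0"
    using nn_integral_coupling_cost[OF assms] moment_solution.integral_S_eq_0[OF \<mu> nonneg] by simp
  then have "AE p in \<mu> \<Otimes>\<^sub>M \<nu>. ennreal (coupling_cost S b (fst p) (snd p)) = 0"
    using borel_measurable_coupling_cost_pair[OF \<mu> \<nu>] by (subst (asm) nn_integral_0_iff_AE) auto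
  then show ?thesis
    by (rule eventually_mono) (use nonneg in \<open>simp add: order_antisym\<close>)
qed

theorem mainTheorem8:
  fixes \<Sigma> :: "real^'d \<Rightarrow> real^'d1^'d" and b :: "real^'d \<Rightarrow> real^'d" and lam :: real
  assumes "\<Sigma> \<in> borel_measurable borel" and "b \<in> borel_measurable borel"
    and "lam > 0"
    and "\<And>x y. x \<noteq> y \<Longrightarrow> inner (x - y) (b x - b y) \<ge> - lam * (norm (x - y))\<^sup>2"
    and "\<And>x y. x \<noteq> y \<Longrightarrow>
           trace ((\<Sigma> x - \<Sigma> y) ** transpose (\<Sigma> x - \<Sigma> y)) > lam * (norm (x - y))\<^sup>2"
  shows "\<forall>\<mu> \<nu>. prob_solution (\<lambda>x. \<Sigma> x ** transpose (\<Sigma> x)) b \<mu>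
           \<and> (\<integral>\<^sup>+ x. ennreal ((norm (\<Sigma> x))\<^sup>2 + norm (b x) * norm x) \<partial>\<mu>) < \<infinity>
           \<and> prob_solution (\<lambda>x. \<Sigma> x ** transpose (\<Sigma> x)) b \<nu>
           \<and> (\<integral>\<^sup>+ x. ennreal ((norm (\<Sigma> x))\<^sup>2 + norm (b x) * norm x) \<partial>\<nu>) < \<infinity>
           \<longrightarrow> \<mu> = \<nu>"
proof (intro allI impI, elim conjE)
  fix \<mu> \<nu> :: "(real^'d) measure"
  assume \<mu>_solution: "prob_solution (\<lambda>x. \<Sigma> x ** transpose (\<Sigma> x)) b \<mu>"
    and \<mu>_moment: "(\<integral>\<^sup>+ x. ennreal ((norm (\<Sigma> x))\<^sup>2 + norm (b x) * norm x) \<partial>\<mu>) < \<infinity>"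
    and \<nu>_solution: "prob_solution (\<lambda>x. \<Sigma> x ** transpose (\<Sigma> x)) b \<nu>"
    and \<nu>_moment: "(\<integral>\<^sup>+ x. ennreal ((norm (\<Sigma> x))\<^sup>2 + norm (b x) * norm x) \<partial>\<nu>) < \<infinity>"
  have cost_pos: "0 < coupling_cost \<Sigma> b x y" if "x \<noteq> y" for x y
    using assms(4,5)[OF that] by (simp add: coupling_cost_def trace_mult_transpose_self)
  then have cost_nonneg: "0 \<le> coupling_cost \<Sigma> b x y" for x y
    by (cases "x = y") (auto simp: coupling_cost_def less_imp_le)
  have coercive: "lam * (norm x)\<^sup>2 \<le> (norm (\<Sigma> x - \<Sigma> 0))\<^sup>2" for x
    using assms(5)[of x 0] by (cases "x = 0") (auto simp: trace_mult_transpose_self)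
  have \<mu>: "moment_solution \<Sigma> b \<mu>" and \<nu>: "moment_solution \<Sigma> b \<nu>"
    by (rule moment_solutionI[OF \<mu>_solution assms(1-3) coercive \<mu>_moment]
        moment_solutionI[OF \<nu>_solution assms(1-3) coercive \<nu>_moment])+
  from \<mu> \<nu> have "AE p in \<mu> \<Otimes>\<^sub>M \<nu>. coupling_cost \<Sigma> b (fst p) (snd p) = 0"
    by (rule AE_coupling_cost_eq_0) (rule cost_nonneg)
  then have "AE p in \<mu> \<Otimes>\<^sub>M \<nu>. fst p = snd p"
    by (rule eventually_mono) (use cost_pos in force)
  then show "\<mu> = \<nu>"
    using \<mu>_solution \<nu>_solution by (intro measure_eq_if_AE_diagonal) (auto simp: prob_solution_def)
qed

end
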